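(* Let $G$ be a graph of order $n$, not isomorphic to the complete graph $K_n$, such that $\tau(G)=\tau>\frac{n}{2}$. Then $\tau\le\beta_p(G)\le\frac{n+\tau}{2}$. Moreover, if $W$ is its $\tau$-set, then (1) $\beta_p(G)=\tau$ if and only if $G[W]\cong\overline{K_\tau}$; and (2) $\tau<\beta_p(G)\le\frac{n+\tau}{2}$ if and only if $G[W]\cong K_\tau$.
   Context: All graphs are finite, simple, undirected and connected. Two vertices $u,v$ are twins if $N(u)\setminus\{v\}=N(v)\setminus\{u\}$; twin classes are the equivalence classes of this relation, and the twin number $\tau(G)$ is the maximum cardinality of a twin class. A twin set is a set of pairwise twin vertices; a $\tau$-set is a twin set of cardinality $\tau(G)$ (it is unique when $\tau(G)>n/2$). $G[W]$ is the induced subgraph. For a partition $\Pi=\{S_1,\dots,S_k\}$ of $V(G)$, $r(u|\Pi)=(d(u,S_1),\dots,d(u,S_k))$ with $d(u,S)=\min_{w\in S}d(u,w)$; $\Pi$ is locating if $r(u|\Pi)\ne r(v|\Pi)$ for all distinct $u,v$; $\beta_p(G)$ is the minimum size of a locating partition. *)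

theory Defs
  imports Complex_Main
begin

definition graph :: "'a set \<Rightarrow> ('a \<Rightarrow> 'a \<Rightarrow> bool) \<Rightarrow> bool" where
  "graph V E \<longleftrightarrow> finite V \<and> V \<noteq> {} \<and>
     (\<forall>u v. E u v \<longrightarrow> u \<in> V \<and> v \<in> V) \<and>
     (\<forall>u v. E u v \<longrightarrow> E v u) \<and> (\<forall>u. \<not> E u u)"

definition connected_graph :: "'a set \<Rightarrow> ('a \<Rightarrow> 'a \<Rightarrow> bool) \<Rightarrow> bool" where
  "connected_graph V E \<longleftrightarrow> graph V E \<and> (\<forall>u\<in>V. \<forall>v\<in>V. E\<^sup>*\<^sup>* u v)"

definition gdist :: "('a \<Rightarrow> 'a \<Rightarrow> bool) \<Rightarrow> 'a \<Rightarrow> 'a \<Rightarrow> nat" where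
  "gdist E u v = (LEAST k. (E ^^ k) u v)"

definition setdist :: "('a \<Rightarrow> 'a \<Rightarrow> bool) \<Rightarrow> 'a \<Rightarrow> 'a set \<Rightarrow> nat" where
  "setdist E u S = Min (gdist E u ` S)"

definition nbhd :: "('a \<Rightarrow> 'a \<Rightarrow> bool) \<Rightarrow> 'a \<Rightarrow> 'a set" where
  "nbhd E u = {w. E u w}"

definition twins :: "('a \<Rightarrow> 'a \<Rightarrow> bool) \<Rightarrow> 'a \<Rightarrow> 'a \<Rightarrow> bool" where
  "twins E u v \<longleftrightarrow> nbhd E u - {v} = nbhd E v - {u}"

definition twin_class :: "'a set \<Rightarrow> ('a \<Rightarrow> 'a \<Rightarrow> bool) \<Rightarrow> 'a \<Rightarrow> 'a set" where
  "twin_class V E u = {v \<in> V. twins E u v}"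

definition twin_number :: "'a set \<Rightarrow> ('a \<Rightarrow> 'a \<Rightarrow> bool) \<Rightarrow> nat" where
  "twin_number V E = Max ((\<lambda>u. card (twin_class V E u)) ` V)"

definition twin_set :: "'a set \<Rightarrow> ('a \<Rightarrow> 'a \<Rightarrow> bool) \<Rightarrow> 'a set \<Rightarrow> bool" where
  "twin_set V E W \<longleftrightarrow> W \<subseteq> V \<and> (\<forall>u\<in>W. \<forall>v\<in>W. twins E u v)"

definition tau_set :: "'a set \<Rightarrow> ('a \<Rightarrow> 'a \<Rightarrow> bool) \<Rightarrow> 'a set \<Rightarrow> bool" where
  "tau_set V E W \<longleftrightarrow> twin_set V E W \<and> card W = twin_number V E"

definition is_partition_list :: "'a set \<Rightarrow> 'a set list \<Rightarrow> bool" where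
  "is_partition_list V P \<longleftrightarrow> distinct P \<and> (\<forall>S\<in>set P. S \<noteq> {}) \<and>
     (\<forall>i<length P. \<forall>j<length P. i \<noteq> j \<longrightarrow> P ! i \<inter> P ! j = {}) \<and> \<Union>(set P) = V"

definition rep :: "('a \<Rightarrow> 'a \<Rightarrow> bool) \<Rightarrow> 'a \<Rightarrow> 'a set list \<Rightarrow> nat list" where
  "rep E u P = map (setdist E u) P"

definition locating_partition :: "'a set \<Rightarrow> ('a \<Rightarrow> 'a \<Rightarrow> bool) \<Rightarrow> 'a set list \<Rightarrow> bool" where
  "locating_partition V E P \<longleftrightarrow> is_partition_list V P \<and>
     (\<forall>u\<in>V. \<forall>v\<in>V. u \<noteq> v \<longrightarrow> rep E u P \<noteq> rep E v P)"

definition partition_dimension :: "'a set \<Rightarrow> ('a \<Rightarrow> 'a \<Rightarrow> bool) \<Rightarrow> nat" where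
  "partition_dimension V E = (LEAST k. \<exists>P. length P = k \<and> locating_partition V E P)"

definition graph_iso :: "'a set \<Rightarrow> ('a \<Rightarrow> 'a \<Rightarrow> bool) \<Rightarrow> 'b set \<Rightarrow> ('b \<Rightarrow> 'b \<Rightarrow> bool) \<Rightarrow> bool" where
  "graph_iso V1 E1 V2 E2 \<longleftrightarrow> (\<exists>f. bij_betw f V1 V2 \<and>
     (\<forall>u\<in>V1. \<forall>v\<in>V1. E1 u v \<longleftrightarrow> E2 (f u) (f v)))"

definition induced_edges :: "('a \<Rightarrow> 'a \<Rightarrow> bool) \<Rightarrow> 'a set \<Rightarrow> 'a \<Rightarrow> 'a \<Rightarrow> bool" where
  "induced_edges E W u v \<longleftrightarrow> E u v \<and> u \<in> W \<and> v \<in> W"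

text \<open>Complete graph K_n and its complement on vertex set {0..<n}.\<close>
definition K_edges :: "nat \<Rightarrow> nat \<Rightarrow> bool" where
  "K_edges i j \<longleftrightarrow> i \<noteq> j"

definition coK_edges :: "nat \<Rightarrow> nat \<Rightarrow> bool" where
  "coK_edges i j \<longleftrightarrow> False"


end

theory Submission
  imports Defs
begin

text \<open>
  Twins have equal distances to every block containing neither of them, so a locating partition
  separates the vertices of the \<open>\<tau>\<close>-set \<open>W\<close> into distinct blocks and \<open>\<tau> \<le> \<beta>\<^sub>p\<close>.
  As \<open>|V - W| < |W|\<close>, the vertices outside \<open>W\<close> (except for a set \<open>B\<close> of singleton blocks) can be
  placed injectively into the blocks of \<open>W - {w\<^sub>0}\<close>; a vertex \<open>u\<close> and its partner in \<open>W\<close>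
  are then separated by \<open>{w\<^sub>0}\<close>, by a vertex of \<open>B\<close>, or by another pair, each time because
  one of them is adjacent to the separating block and the other is not.
  If \<open>G[W]\<close> has no edges, \<open>B = {}\<close> suffices and \<open>\<beta>\<^sub>p = \<tau>\<close>. If \<open>G[W]\<close> is complete,
  \<open>\<tau>\<close> blocks would each contain a vertex of \<open>W\<close>, and a neighbour of \<open>W\<close> outside \<open>W\<close> could not
  be told apart from the vertex of \<open>W\<close> in its block, so \<open>\<beta>\<^sub>p > \<tau>\<close>; here \<open>B\<close> must dominate the
  neighbourhood of \<open>W\<close> with respect to the relation "distinguishes", and Ore's argument gives
  such a \<open>B\<close> with \<open>|B| \<le> |V - W| / 2\<close>, whence \<open>\<beta>\<^sub>p \<le> (n + \<tau>) / 2\<close>.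
\<close>

definition clique :: "('a \<Rightarrow> 'a \<Rightarrow> bool) \<Rightarrow> 'a set \<Rightarrow> bool" where
  "clique E W \<longleftrightarrow> (\<forall>x\<in>W. \<forall>y\<in>W. x \<noteq> y \<longrightarrow> E x y)"

definition indep_set :: "('a \<Rightarrow> 'a \<Rightarrow> bool) \<Rightarrow> 'a set \<Rightarrow> bool" where
  "indep_set E W \<longleftrightarrow> (\<forall>x\<in>W. \<forall>y\<in>W. \<not> E x y)"

lemma gdist_le: "(E ^^ k) u v \<Longrightarrow> gdist E u v \<le> k"
  unfolding gdist_def by (rule Least_le)

lemma gdist_self: "gdist E u u = 0"
  using gdist_le[of 0 E u u] by simp

lemma twins_refl: "twins E u u"
  unfolding twins_def by simp

lemma twins_sym: "twins E u v \<Longrightarrow> twins E v u"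
  unfolding twins_def by simp

lemma graph_iso_K_edges_iff:
  assumes "finite W"
  shows "graph_iso W R {..<card W} K_edges \<longleftrightarrow> (\<forall>x\<in>W. \<forall>y\<in>W. R x y \<longleftrightarrow> x \<noteq> y)"
proof
  assume "graph_iso W R {..<card W} K_edges"
  then obtain f where f: "bij_betw f W {..<card W}" "\<forall>u\<in>W. \<forall>v\<in>W. R u v \<longleftrightarrow> K_edges (f u) (f v)"
    unfolding graph_iso_def by blast
  then show "\<forall>x\<in>W. \<forall>y\<in>W. R x y \<longleftrightarrow> x \<noteq> y"
    using inj_on_eq_iff[OF bij_betw_imp_inj_on[OF f(1)]] unfolding K_edges_def by simp
next
  assume R: "\<forall>x\<in>W. \<forall>y\<in>W. R x y \<longleftrightarrow> x \<noteq> y"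
  obtain f where f: "bij_betw f W {..<card W}"
    using ex_bij_betw_finite_nat[OF assms] atLeast0LessThan by metis
  then have "\<forall>u\<in>W. \<forall>v\<in>W. R u v \<longleftrightarrow> K_edges (f u) (f v)"
    using R inj_on_eq_iff[OF bij_betw_imp_inj_on[OF f]] unfolding K_edges_def by simp
  then show "graph_iso W R {..<card W} K_edges"
    unfolding graph_iso_def using f by blast
qed

lemma graph_iso_coK_edges_iff:
  assumes "finite W"
  shows "graph_iso W R {..<card W} coK_edges \<longleftrightarrow> (\<forall>x\<in>W. \<forall>y\<in>W. \<not> R x y)"
proof
  assume "graph_iso W R {..<card W} coK_edges"
  then show "\<forall>x\<in>W. \<forall>y\<in>W. \<not> R x y" unfolding graph_iso_def coK_edges_def by blast
next
  assume "\<forall>x\<in>W. \<forall>y\<in>W. \<not> R x y"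
  moreover obtain f where "bij_betw f W {..<card W}"
    using ex_bij_betw_finite_nat[OF assms] atLeast0LessThan by metis
  ultimately show "graph_iso W R {..<card W} coK_edges"
    unfolding graph_iso_def coK_edges_def by blast
qed

lemma partition_list_block_unique:
  assumes P: "is_partition_list V P" and "S \<in> set P" "T \<in> set P" "u \<in> S" "u \<in> T"
  shows "S = T"
proof -
  obtain i j where ij: "i < length P" "j < length P" "S = P ! i" "T = P ! j"
    using assms(2,3) by (metis in_set_conv_nth)
  have "P ! i \<inter> P ! j \<noteq> {}" using ij assms(4,5) by blast
  then have "i = j" using P ij(1,2) unfolding is_partition_list_def by meson
  then show ?thesis using ij by simp
qed

definition block_of :: "'a set list \<Rightarrow> 'a \<Rightarrow> 'a set" where
  "block_of P u = (THE S. S \<in> set P \<and> u \<in> S)"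

lemma block_of_eq:
  assumes "is_partition_list V P" "S \<in> set P" "u \<in> S"
  shows "block_of P u = S"
  unfolding block_of_def
proof (rule the_equality)
  show "S \<in> set P \<and> u \<in> S" using assms(2,3) ..
  show "T = S" if "T \<in> set P \<and> u \<in> T" for T
    using partition_list_block_unique[OF assms(1), of T S u] that assms(2,3) by blast
qed

lemma block_of_in:
  assumes P: "is_partition_list V P" and "u \<in> V"
  shows "block_of P u \<in> set P" and "u \<in> block_of P u"
proof -
  have "u \<in> \<Union> (set P)" using P assms(2) unfolding is_partition_list_def by simp
  then obtain S where "S \<in> set P" "u \<in> S" by blast
  then show "block_of P u \<in> set P" "u \<in> block_of P u"
    using block_of_eq[OF P] by simp_all
qed

lemma partition_list_of_disjoint_family:
  assumes "finite R" and ne: "\<forall>z\<in>R. C z \<noteq> {}"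
    and disj: "\<forall>z\<in>R. \<forall>z'\<in>R. z \<noteq> z' \<longrightarrow> C z \<inter> C z' = {}"
  shows "\<exists>P. set P = C ` R \<and> length P = card R \<and> is_partition_list (\<Union> (C ` R)) P"
proof -
  have inj: "inj_on C R"
  proof (rule inj_onI, rule ccontr)
    fix z z' assume "z \<in> R" "z' \<in> R" "C z = C z'" "z \<noteq> z'"
    then show False using ne disj by (metis Int_absorb)
  qed
  obtain zs where zs: "set zs = R" "distinct zs" using finite_distinct_list[OF assms(1)] by blast
  have "is_partition_list (\<Union> (C ` R)) (map C zs)"
    unfolding is_partition_list_def
  proof (intro conjI allI impI)
    show "distinct (map C zs)" using zs inj by (simp add: distinct_map)
    show "\<forall>S\<in>set (map C zs). S \<noteq> {}" using zs ne by simp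
    show "\<Union> (set (map C zs)) = \<Union> (C ` R)" using zs by simp
    fix i j assume ij: "i < length (map C zs)" "j < length (map C zs)" "i \<noteq> j"
    then have "zs ! i \<in> R" "zs ! j \<in> R" "zs ! i \<noteq> zs ! j"
      using zs by (auto simp: nth_eq_iff_index_eq)
    then show "map C zs ! i \<inter> map C zs ! j = {}" using disj ij by simp
  qed
  moreover have "length (map C zs) = card R" using zs distinct_card by fastforce
  ultimately show ?thesis using zs by (intro exI[of _ "map C zs"]) simp
qed

definition pair_block :: "'a set \<Rightarrow> ('a \<Rightarrow> 'a) \<Rightarrow> 'a \<Rightarrow> 'a set" where
  "pair_block A g z = insert z {x\<in>A. g x = z}"

lemma pair_block_unpaired: "z \<notin> g ` A \<Longrightarrow> pair_block A g z = {z}"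
  unfolding pair_block_def by blast

lemma pair_block_paired: "inj_on g A \<Longrightarrow> c \<in> A \<Longrightarrow> pair_block A g (g c) = {g c, c}"
  unfolding pair_block_def inj_on_def by blast

lemma partition_dimension_le:
  assumes "locating_partition V E P"
  shows "partition_dimension V E \<le> length P"
  unfolding partition_dimension_def by (rule Least_le) (use assms in blast)

lemma partition_dimension_attained:
  assumes "locating_partition V E P"
  shows "\<exists>P'. length P' = partition_dimension V E \<and> locating_partition V E P'"
  unfolding partition_dimension_def by (rule LeastI) (use assms in blast)

definition dominates :: "('a \<Rightarrow> 'a \<Rightarrow> bool) \<Rightarrow> 'a set \<Rightarrow> 'a set \<Rightarrow> bool" where
  "dominates R D B \<longleftrightarrow> (\<forall>a\<in>D - B. \<exists>b\<in>B. R a b)"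

lemma dominates_complement_of_minimum:
  assumes U: "finite U" "D \<subseteq> U"
    and has_nbr: "\<forall>a\<in>D. \<exists>c\<in>U - {a}. R a c"
    and sym: "\<forall>a\<in>D. \<forall>x\<in>D. R x a \<longrightarrow> R a x"
    and B: "B \<subseteq> U" "dominates R D B"
    and min: "\<And>B'. B' \<subseteq> U \<Longrightarrow> dominates R D B' \<Longrightarrow> card B \<le> card B'"
  shows "dominates R D (U - B)"
proof -
  have "\<exists>b\<in>U - B. R a b" if a: "a \<in> D" "a \<in> B" for a
  proof (rule ccontr)
    assume none: "\<not> (\<exists>b\<in>U - B. R a b)"
    have "dominates R D (B - {a})"
      unfolding dominates_def
    proof
      fix x assume x: "x \<in> D - (B - {a})"
      show "\<exists>b\<in>B - {a}. R x b"
      proof (cases "x = a")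
        case True
        then show ?thesis using has_nbr a none by blast
      next
        case False
        then have "x \<in> D - B" using x by blast
        then obtain b where b: "b \<in> B" "R x b" using B(2) unfolding dominates_def by blast
        have "b \<noteq> a"
        proof
          assume "b = a"
          then have "R a x" using sym a \<open>x \<in> D - B\<close> b(2) by blast
          then show False using none \<open>x \<in> D - B\<close> U(2) by blast
        qed
        then show ?thesis using b by blast
      qed
    qed
    moreover have "card (B - {a}) < card B"
      using card_Diff1_less[OF finite_subset[OF B(1) U(1)] a(2)] .
    ultimately show False using min[of "B - {a}"] B(1) by fastforce
  qed
  then show ?thesis unfolding dominates_def using U(2) by blast
qed

text \<open>Ore's argument: a minimum dominating set and its complement both dominate.\<close>
lemma small_dominating_set:
  assumes U: "finite U" "D \<subseteq> U"
    and has_nbr: "\<forall>a\<in>D. \<exists>c\<in>U - {a}. R a c"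
    and sym: "\<forall>a\<in>D. \<forall>x\<in>D. R x a \<longrightarrow> R a x"
  shows "\<exists>B\<subseteq>U. 2 * card B \<le> card U \<and> dominates R D B"
proof -
  have "U \<subseteq> U \<and> dominates R D U" unfolding dominates_def using U(2) by blast
  then obtain B where B: "B \<subseteq> U" "dominates R D B"
    and min: "\<And>B'. B' \<subseteq> U \<and> dominates R D B' \<Longrightarrow> card B \<le> card B'"
    using ex_has_least_nat[of "\<lambda>B. B \<subseteq> U \<and> dominates R D B" U card] by blast
  have "dominates R D (U - B)"
    using dominates_complement_of_minimum[OF U has_nbr sym B] min by blast
  moreover have "card B + card (U - B) = card U"
    using card_Diff_subset[OF finite_subset[OF B(1) U(1)] B(1)] card_mono[OF U(1) B(1)] by simp
  ultimately show ?thesis using B by (metis Diff_subset add_le_mono mult_2 nat_le_linear)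
qed

section \<open>Distances and twins in a connected graph\<close>

locale connected_simple_graph =
  fixes V :: "'a set" and E :: "'a \<Rightarrow> 'a \<Rightarrow> bool"
  assumes connected: "connected_graph V E"
begin

lemma finite_V: "finite V"
  using connected by (simp add: connected_graph_def graph_def)

lemma edge_in_V: "E u v \<Longrightarrow> u \<in> V \<and> v \<in> V"
  using connected by (simp add: connected_graph_def graph_def)

lemma edge_sym: "E u v \<Longrightarrow> E v u"
  using connected by (simp add: connected_graph_def graph_def)

lemma no_loop: "\<not> E u u"
  using connected by (simp add: connected_graph_def graph_def)

lemma gdist_walk:
  assumes "u \<in> V" "v \<in> V"
  shows "(E ^^ gdist E u v) u v"
proof -
  have "E\<^sup>*\<^sup>* u v" using connected assms unfolding connected_graph_def by blast
  then have "\<exists>k. (E ^^ k) u v" by (rule rtranclp_imp_relpowp)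
  then show ?thesis unfolding gdist_def by (rule LeastI_ex)
qed

lemma gdist_pos: "u \<in> V \<Longrightarrow> v \<in> V \<Longrightarrow> u \<noteq> v \<Longrightarrow> 0 < gdist E u v"
  using gdist_walk[of u v] by (metis gr0I relpowp_0_E)

lemma gdist_eq_1_iff:
  assumes "u \<in> V" "v \<in> V"
  shows "gdist E u v = 1 \<longleftrightarrow> E u v"
proof
  assume "gdist E u v = 1"
  then show "E u v" using gdist_walk[OF assms] by (metis relpowp_1)
next
  assume e: "E u v"
  then have "gdist E u v \<le> 1" using gdist_le[of 1 E u v] by (metis relpowp_1)
  moreover have "u \<noteq> v" using e no_loop by blast
  ultimately show "gdist E u v = 1" using gdist_pos[OF assms] by linarith
qed

lemma setdist_eq_0: "S \<subseteq> V \<Longrightarrow> u \<in> S \<Longrightarrow> setdist E u S = 0"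
  unfolding setdist_def using finite_subset[OF _ finite_V] gdist_self[of E u]
  by (metis Min_le finite_imageI image_eqI le_zero_eq)

lemma setdist_pos:
  assumes "S \<subseteq> V" "S \<noteq> {}" "u \<in> V - S"
  shows "0 < setdist E u S"
proof -
  have "\<forall>y\<in>S. 0 < gdist E u y" using gdist_pos assms by blast
  then show ?thesis
    unfolding setdist_def using finite_subset[OF assms(1) finite_V] assms(2) by simp
qed

lemma setdist_eq_1_iff:
  assumes S: "S \<subseteq> V" "S \<noteq> {}" and u: "u \<in> V - S"
  shows "setdist E u S = 1 \<longleftrightarrow> (\<exists>y\<in>S. E u y)"
proof -
  have fin: "finite (gdist E u ` S)" using finite_subset[OF S(1) finite_V] by simp
  have pos: "\<forall>y\<in>S. 0 < gdist E u y" using gdist_pos S u by blast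
  have "setdist E u S = 1 \<longleftrightarrow> (\<exists>y\<in>S. gdist E u y = 1)"
    unfolding setdist_def using Min_in[OF fin] Min_le[OF fin] S(2) pos
    by (metis (no_types, lifting) imageE image_eqI image_is_empty le_antisym less_one not_less)
  also have "\<dots> \<longleftrightarrow> (\<exists>y\<in>S. E u y)" using gdist_eq_1_iff S(1) u by blast
  finally show ?thesis .
qed

lemma setdist_neq_if_adjacency_differs:
  assumes "S \<subseteq> V" "S \<noteq> {}" "u \<in> V - S" "v \<in> V - S"
    and "(\<exists>y\<in>S. E u y) \<noteq> (\<exists>y\<in>S. E v y)"
  shows "setdist E u S \<noteq> setdist E v S"
  using setdist_eq_1_iff[OF assms(1,2)] assms(3-5) by metis

lemma twins_adj: "twins E u v \<Longrightarrow> E u z \<Longrightarrow> z \<noteq> v \<Longrightarrow> E v z"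
  unfolding twins_def nbhd_def using no_loop by blast

lemma twins_trans:
  assumes uv: "twins E u v" and vw: "twins E v w"
  shows "twins E u w"
proof (cases "u = v \<or> v = w \<or> u = w")
  case True
  then show ?thesis using uv vw twins_refl by auto
next
  case False
  have transfer: "E c x" if "twins E a b" "twins E b c" "a \<noteq> b" "b \<noteq> c" "a \<noteq> c"
    "E a x" "x \<noteq> c" for a b c x
  proof (cases "x = b")
    case True
    then show ?thesis
      using that twins_adj[of b c a] twins_adj[of a b c] edge_sym by metis
  next
    case False
    then show ?thesis using that twins_adj by metis
  qed
  have "E w x" if "E u x" "x \<noteq> w" for x using transfer[OF uv vw] False that by blast
  moreover have "E u x" if "E w x" "x \<noteq> u" for x
    using transfer[OF twins_sym[OF vw] twins_sym[OF uv]] False that by blast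
  ultimately show ?thesis unfolding twins_def nbhd_def using no_loop by blast
qed

lemma twins_gdist_le:
  assumes t: "twins E u v" and "u \<in> V" "v \<in> V" "y \<in> V" "y \<noteq> u"
  shows "gdist E v y \<le> gdist E u y"
proof (cases "gdist E u y")
  case 0
  then show ?thesis using gdist_pos assms by fastforce
next
  case (Suc m)
  then obtain z where z: "E u z" "(E ^^ m) z y"
    using gdist_walk[of u y] assms by (metis relpowp_Suc_D2)
  have "(E ^^ Suc m) v y" if "z \<noteq> v"
    using twins_adj[OF t z(1) that] z(2) by (rule relpowp_Suc_I2)
  moreover have "(E ^^ m) v y" if "z = v" using z(2) that by simp
  ultimately show ?thesis using gdist_le Suc by (metis le_SucI)
qed

lemma twins_setdist_eq:
  assumes t: "twins E u v" and uv: "u \<in> V" "v \<in> V" and S: "S \<subseteq> V" "u \<in> S \<longleftrightarrow> v \<in> S"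
  shows "setdist E u S = setdist E v S"
proof (cases "u \<in> S")
  case True
  then show ?thesis using setdist_eq_0 S by simp
next
  case False
  have "gdist E u y = gdist E v y" if "y \<in> S" for y
    using twins_gdist_le[OF t] twins_gdist_le[OF twins_sym[OF t]] uv S that False
    by (metis le_antisym subsetD)
  then show ?thesis unfolding setdist_def by (metis image_cong)
qed

lemma twin_set_neighbour_adj:
  assumes T: "twin_set V E T" and w: "w \<in> T" "E v w" and "v \<notin> T" and x: "x \<in> T"
  shows "E v x"
proof (cases "x = w")
  case False
  have "twins E w x" using T w(1) x unfolding twin_set_def by blast
  then have "E x v" using twins_adj edge_sym[OF w(2)] \<open>v \<notin> T\<close> x by blast
  then show ?thesis by (rule edge_sym)
qed (use w in simp)

lemma twin_set_clique_or_indep: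
  assumes T: "twin_set V E T"
  shows "clique E T \<or> indep_set E T"
proof (rule disjCI)
  assume "\<not> indep_set E T"
  then obtain a b where ab: "a \<in> T" "b \<in> T" "E a b" unfolding indep_set_def by blast
  have tw: "twins E x y" if "x \<in> T" "y \<in> T" for x y using T that unfolding twin_set_def by blast
  have a_adj: "E a y" if "y \<in> T" "y \<noteq> a" for y
  proof (cases "y = b")
    case False
    then show ?thesis using twins_adj[OF tw[OF ab(2) that(1)] edge_sym[OF ab(3)]] that edge_sym by blast
  qed (use ab in simp)
  show "clique E T"
    unfolding clique_def
  proof (intro ballI impI)
    fix x y assume xy: "x \<in> T" "y \<in> T" "x \<noteq> y"
    show "E x y"
    proof (cases "x = a \<or> y = a")
      case True
      then show ?thesis using a_adj xy edge_sym by blast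
    next
      case False
      then show ?thesis using twins_adj[OF tw[OF ab(1) xy(2)] a_adj[OF xy(1)]] xy edge_sym by blast
    qed
  qed
qed

lemma twin_set_V_complete:
  assumes "twin_set V E V"
  shows "graph_iso V E {..<card V} K_edges"
proof -
  have "clique E V"
  proof (rule ccontr)
    assume "\<not> clique E V"
    then obtain x y where xy: "x \<in> V" "y \<in> V" "x \<noteq> y" unfolding clique_def by blast
    have indep: "indep_set E V" using twin_set_clique_or_indep[OF assms] \<open>\<not> clique E V\<close> by blast
    have "E\<^sup>*\<^sup>* x y" using connected xy unfolding connected_graph_def by blast
    then show False
    proof (cases rule: converse_rtranclpE)
      case (step z)
      then show False using indep edge_in_V xy(1) unfolding indep_set_def by blast
    qed (use xy in simp)
  qed
  then have "\<forall>x\<in>V. \<forall>y\<in>V. E x y \<longleftrightarrow> x \<noteq> y" using no_loop unfolding clique_def by blast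
  then show ?thesis using graph_iso_K_edges_iff[OF finite_V] by simp
qed

lemma edge_leaving:
  assumes "S \<subseteq> V" "S \<noteq> {}" "S \<noteq> V"
  shows "\<exists>v\<in>V - S. \<exists>w\<in>S. E v w"
proof -
  obtain w x where "w \<in> S" "x \<in> V - S" using assms by blast
  then have "E\<^sup>*\<^sup>* w x" using connected assms(1) unfolding connected_graph_def by blast
  then show ?thesis using \<open>w \<in> S\<close> \<open>x \<in> V - S\<close>
  proof (induction rule: rtranclp_induct)
    case (step y z)
    then show ?case by (metis DiffI edge_in_V edge_sym)
  qed simp
qed

lemma locating_partition_if_blocks_separated:
  assumes P: "is_partition_list V P"
    and sep: "\<forall>S\<in>set P. \<forall>u\<in>S. \<forall>v\<in>S. u \<noteq> v \<longrightarrow> (\<exists>T\<in>set P. setdist E u T \<noteq> setdist E v T)"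
  shows "locating_partition V E P"
  unfolding locating_partition_def
proof (rule conjI[OF P], intro ballI impI)
  fix u v assume u: "u \<in> V" and v: "v \<in> V" and "u \<noteq> v"
  let ?S = "block_of P u"
  have S: "?S \<in> set P" "u \<in> ?S" using block_of_in[OF P u] by simp_all
  have "?S \<subseteq> V" using S(1) P unfolding is_partition_list_def by blast
  have "\<exists>T\<in>set P. setdist E u T \<noteq> setdist E v T"
  proof (cases "v \<in> ?S")
    case True
    then show ?thesis using sep S \<open>u \<noteq> v\<close> by blast
  next
    case False
    then have "setdist E u ?S \<noteq> setdist E v ?S"
      using setdist_eq_0[OF \<open>?S \<subseteq> V\<close> S(2)] setdist_pos[OF \<open>?S \<subseteq> V\<close>] S(2) v by force
    then show ?thesis using S(1) by blast
  qed
  then show "rep E u P \<noteq> rep E v P" unfolding rep_def by (metis map_eq_conv)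
qed

text \<open>The vertices of \<open>A\<close> are matched injectively into \<open>R\<close> by \<open>g\<close>; the blocks are the
  sets \<open>pair_block A g z\<close> for \<open>z \<in> R\<close>.\<close>
lemma locating_partition_of_pairing:
  assumes V: "R \<union> A = V" and disj: "R \<inter> A = {}" and g: "inj_on g A" "g ` A \<subseteq> R"
    and sep: "\<forall>u\<in>A. \<exists>z\<in>R. setdist E u (pair_block A g z) \<noteq> setdist E (g u) (pair_block A g z)"
  shows "\<exists>P. length P = card R \<and> locating_partition V E P"
proof -
  have cover: "\<Union> (pair_block A g ` R) = V"
  proof
    show "\<Union> (pair_block A g ` R) \<subseteq> V" using V unfolding pair_block_def by auto
    show "V \<subseteq> \<Union> (pair_block A g ` R)"
    proof
      fix x assume "x \<in> V"
      then have "x \<in> pair_block A g x \<and> x \<in> R \<or> x \<in> pair_block A g (g x) \<and> g x \<in> R"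
        using V g(2) unfolding pair_block_def by auto
      then show "x \<in> \<Union> (pair_block A g ` R)" by blast
    qed
  qed
  have "finite R" using finite_V unfolding V[symmetric] by simp
  moreover have "\<forall>z\<in>R. pair_block A g z \<noteq> {}" unfolding pair_block_def by simp
  moreover have "\<forall>z\<in>R. \<forall>z'\<in>R. z \<noteq> z' \<longrightarrow> pair_block A g z \<inter> pair_block A g z' = {}"
    using disj unfolding pair_block_def by auto
  ultimately have "\<exists>P. set P = pair_block A g ` R \<and> length P = card R \<and> is_partition_list V P"
    using partition_list_of_disjoint_family[of R "pair_block A g"] unfolding cover by simp
  then obtain P where P: "set P = pair_block A g ` R" "length P = card R" "is_partition_list V P"
    by blast
  have "locating_partition V E P"
  proof (rule locating_partition_if_blocks_separated[OF P(3)], intro ballI impI)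
    fix S u v assume "S \<in> set P" "u \<in> S" "v \<in> S" "u \<noteq> v"
    then obtain z where "u \<in> pair_block A g z" "v \<in> pair_block A g z" unfolding P(1) by blast
    then have "(u \<in> A \<and> v = g u) \<or> (v \<in> A \<and> u = g v)"
      using \<open>u \<noteq> v\<close> g(1) by (auto simp: pair_block_def dest: inj_onD)
    moreover have "\<exists>T\<in>set P. setdist E x T \<noteq> setdist E (g x) T" if "x \<in> A" for x
      using sep that unfolding P(1) by blast
    ultimately show "\<exists>T\<in>set P. setdist E u T \<noteq> setdist E v T" by metis
  qed
  then show ?thesis using P(2) by blast
qed

lemma ex_locating_partition: "\<exists>P. length P = card V \<and> locating_partition V E P"
  using locating_partition_of_pairing[of V "{}" id] by simp

lemma twins_in_distinct_blocks:
  assumes L: "locating_partition V E P" and t: "twins E u v"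
    and "u \<in> V" "v \<in> V" "u \<noteq> v"
  shows "block_of P u \<noteq> block_of P v"
proof
  assume same: "block_of P u = block_of P v"
  have P: "is_partition_list V P" using L unfolding locating_partition_def by simp
  have "setdist E u S = setdist E v S" if S: "S \<in> set P" for S
  proof (rule twins_setdist_eq[OF t \<open>u \<in> V\<close> \<open>v \<in> V\<close>])
    show "S \<subseteq> V" using S P unfolding is_partition_list_def by blast
    show "u \<in> S \<longleftrightarrow> v \<in> S"
      using block_of_eq[OF P S] block_of_in[OF P] same \<open>u \<in> V\<close> \<open>v \<in> V\<close> by metis
  qed
  then have "rep E u P = rep E v P" unfolding rep_def by simp
  then show False using L assms(3-5) unfolding locating_partition_def by blast
qed

lemma card_twin_set_le_length:
  assumes L: "locating_partition V E P" and T: "twin_set V E T"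
  shows "card T \<le> length P"
proof -
  have P: "is_partition_list V P" using L unfolding locating_partition_def by simp
  have "inj_on (block_of P) T"
    using twins_in_distinct_blocks[OF L] T unfolding twin_set_def inj_on_def by blast
  then have "card T = card (block_of P ` T)" by (simp add: card_image)
  also have "\<dots> \<le> card (set P)"
    using block_of_in(1)[OF P] T unfolding twin_set_def by (intro card_mono) auto
  also have "\<dots> \<le> length P" by (rule card_length)
  finally show ?thesis .
qed

lemma card_twin_set_le_partition_dimension:
  "twin_set V E T \<Longrightarrow> card T \<le> partition_dimension V E"
  using ex_locating_partition partition_dimension_attained card_twin_set_le_length by metis

lemma block_of_image_eq_if_card_eq:
  assumes L: "locating_partition V E P" and T: "twin_set V E T" and card: "card T = length P"
  shows "block_of P ` T = set P"
proof -
  have P: "is_partition_list V P" using L unfolding locating_partition_def by simp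
  have "inj_on (block_of P) T"
    using twins_in_distinct_blocks[OF L] T unfolding twin_set_def inj_on_def by blast
  then have "card (block_of P ` T) = card (set P)"
    using card P distinct_card unfolding is_partition_list_def by (metis card_image)
  moreover have "block_of P ` T \<subseteq> set P" using block_of_in(1)[OF P] T unfolding twin_set_def by blast
  ultimately show ?thesis by (simp add: card_subset_eq)
qed

text \<open>If a twin clique \<open>T\<close> had as many vertices as there are blocks, every block would contain
  exactly one of them, and a neighbour \<open>v\<close> of \<open>T\<close> outside \<open>T\<close> would have the same
  representation as the vertex of \<open>T\<close> in its own block.\<close>
lemma card_twin_clique_less_length:
  assumes L: "locating_partition V E P" and T: "twin_set V E T" "clique E T"
    and v: "v \<in> V - T" and w: "w \<in> T" "E v w"
  shows "card T < length P"
proof -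
  have P: "is_partition_list V P" using L unfolding locating_partition_def by simp
  have TV: "T \<subseteq> V" using T(1) unfolding twin_set_def by blast
  have blocks_V: "S \<subseteq> V" if "S \<in> set P" for S using that P unfolding is_partition_list_def by blast
  have "card T \<noteq> length P"
  proof
    assume "card T = length P"
    then have onto: "block_of P ` T = set P" using block_of_image_eq_if_card_eq[OF L T(1)] by simp
    have vV: "v \<in> V" "v \<notin> T" using v by simp_all
    obtain x where x: "x \<in> T" "block_of P x = block_of P v"
      using onto block_of_in(1)[OF P vV(1)] by (metis imageE)
    have xV: "x \<in> V" using x TV by blast
    have "setdist E v S = setdist E x S" if S: "S \<in> set P" for S
    proof (cases "S = block_of P v")
      case True
      then show ?thesis using setdist_eq_0[OF blocks_V[OF S]] block_of_in(2)[OF P] x vV xV by metis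
    next
      case False
      obtain y where y: "y \<in> T" "S = block_of P y" using onto S by blast
      have "y \<in> S" using y block_of_in(2)[OF P] TV by blast
      have "v \<notin> S" "x \<notin> S" using False x block_of_eq[OF P S] by metis+
      have "x \<noteq> y" using x y False by blast
      then have "E x y" using T(2) x y unfolding clique_def by blast
      have "setdist E v S = 1" "setdist E x S = 1"
        using setdist_eq_1_iff[OF blocks_V[OF S]] \<open>y \<in> S\<close> \<open>v \<notin> S\<close> \<open>x \<notin> S\<close> vV xV
          twin_set_neighbour_adj[OF T(1) w vV(2) y(1)] \<open>E x y\<close> by blast+
      then show ?thesis by simp
    qed
    then have "rep E v P = rep E x P" unfolding rep_def by simp
    moreover have "v \<noteq> x" using vV x by blast
    ultimately show False using L vV xV unfolding locating_partition_def by blast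
  qed
  then show ?thesis using card_twin_set_le_length[OF L T(1)] by simp
qed

lemma twin_class_twin_set: "twin_set V E (twin_class V E u)"
  unfolding twin_set_def
proof (intro conjI ballI)
  show "twin_class V E u \<subseteq> V" unfolding twin_class_def by blast
  fix x y assume "x \<in> twin_class V E u" "y \<in> twin_class V E u"
  then have "twins E u x" "twins E u y" unfolding twin_class_def by simp_all
  then show "twins E x y" using twins_trans[OF twins_sym] by blast
qed

lemma card_twin_set_le_twin_number:
  assumes T: "twin_set V E T"
  shows "card T \<le> twin_number V E"
proof (cases "T = {}")
  case False
  then obtain u where u: "u \<in> T" by blast
  have "T \<subseteq> twin_class V E u" using T u unfolding twin_set_def twin_class_def by blast
  then have "card T \<le> card (twin_class V E u)"
    using finite_V by (intro card_mono) (auto simp: twin_class_def)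
  also have "\<dots> \<le> twin_number V E"
    unfolding twin_number_def using finite_V u T unfolding twin_set_def by (intro Max_ge) auto
  finally show ?thesis .
qed simp

lemma tau_set_exists: "\<exists>W. tau_set V E W"
proof -
  have "V \<noteq> {}" using connected by (simp add: connected_graph_def graph_def)
  then have "twin_number V E \<in> (\<lambda>u. card (twin_class V E u)) ` V"
    unfolding twin_number_def using finite_V by (intro Max_in) auto
  then obtain u where "card (twin_class V E u) = twin_number V E" by auto
  then have "tau_set V E (twin_class V E u)"
    unfolding tau_set_def using twin_class_twin_set by simp
  then show ?thesis ..
qed

lemma tau_set_maximal:
  assumes W: "tau_set V E W" and w: "w \<in> W" and x: "x \<in> V - W"
  shows "\<not> twins E w x"
proof
  assume wx: "twins E w x"
  have WV: "W \<subseteq> V" and tw: "\<And>u v. u \<in> W \<Longrightarrow> v \<in> W \<Longrightarrow> twins E u v"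
    using W unfolding tau_set_def twin_set_def by blast+
  have x_tw: "twins E x u" if "u \<in> W" for u
    using twins_trans[OF twins_sym[OF wx] tw[OF w that]] .
  have "twin_set V E (insert x W)"
    unfolding twin_set_def
  proof (intro conjI ballI)
    show "insert x W \<subseteq> V" using WV x by blast
    fix u v assume "u \<in> insert x W" "v \<in> insert x W"
    then consider "u = x" "v = x" | "u = x" "v \<in> W" | "u \<in> W" "v = x" | "u \<in> W" "v \<in> W"
      by blast
    then show "twins E u v" by cases (simp_all add: twins_refl x_tw twins_sym tw)
  qed
  then have "card (insert x W) \<le> card W"
    using card_twin_set_le_twin_number W unfolding tau_set_def by simp
  moreover have "finite W" using WV finite_V by (rule finite_subset)
  ultimately show False using x by simp
qed

lemma induced_graph_iso_K_edges_iff: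
  assumes "W \<subseteq> V"
  shows "graph_iso W (induced_edges E W) {..<card W} K_edges \<longleftrightarrow> clique E W"
proof -
  have "(\<forall>x\<in>W. \<forall>y\<in>W. induced_edges E W x y \<longleftrightarrow> x \<noteq> y) \<longleftrightarrow> clique E W"
    unfolding clique_def induced_edges_def using no_loop by blast
  then show ?thesis using graph_iso_K_edges_iff[OF finite_subset[OF assms finite_V]] by simp
qed

lemma induced_graph_iso_coK_edges_iff:
  assumes "W \<subseteq> V"
  shows "graph_iso W (induced_edges E W) {..<card W} coK_edges \<longleftrightarrow> indep_set E W"
proof -
  have "(\<forall>x\<in>W. \<forall>y\<in>W. \<not> induced_edges E W x y) \<longleftrightarrow> indep_set E W"
    unfolding indep_set_def induced_edges_def by blast
  then show ?thesis using graph_iso_coK_edges_iff[OF finite_subset[OF assms finite_V]] by simp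
qed

end

section \<open>A twin class containing more than half of the vertices\<close>

locale large_twin_class = connected_simple_graph +
  fixes W :: "'a set"
  assumes tau_set: "tau_set V E W"
    and W_ne_V: "W \<noteq> V"
    and card_V_less: "card V < 2 * card W"
begin

lemma W_twin_set: "twin_set V E W"
  using tau_set unfolding tau_set_def by simp

lemma W_subset: "W \<subseteq> V"
  using W_twin_set unfolding twin_set_def by simp

lemma finite_W: "finite W"
  using W_subset finite_V by (rule finite_subset)

lemma card_outside: "card (V - W) = card V - card W"
  using finite_W W_subset by (rule card_Diff_subset)

lemma card_outside_less: "card (V - W) < card W"
  using card_outside card_V_less by linarith

lemma card_W_ge_2: "2 \<le> card W"
proof -
  have "V - W \<noteq> {}" using W_subset W_ne_V by blast
  then have "0 < card (V - W)" using finite_V by (simp add: card_gt_0_iff)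
  then show ?thesis using card_outside_less by linarith
qed

definition boundary :: "'a set" where
  "boundary = {x \<in> V - W. \<exists>w\<in>W. E w x}"

lemma adj_W_iff_boundary:
  assumes "w \<in> W" "x \<in> V - W"
  shows "E x w \<longleftrightarrow> x \<in> boundary"
  using assms twin_set_neighbour_adj[OF W_twin_set] edge_sym unfolding boundary_def by blast

lemma adj_in_W_iff_clique:
  assumes "w \<in> W" "w' \<in> W" "w \<noteq> w'"
  shows "E w w' \<longleftrightarrow> clique E W"
  using assms twin_set_clique_or_indep[OF W_twin_set] unfolding clique_def indep_set_def by blast

lemma clique_iff_not_indep: "clique E W \<longleftrightarrow> \<not> indep_set E W"
proof -
  obtain w w' where "w \<in> W" "w' \<in> W" "w \<noteq> w'"
    using card_W_ge_2 by (metis card_le_Suc_iff numeral_2_eq_2 insertCI)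
  then show ?thesis
    using adj_in_W_iff_clique twin_set_clique_or_indep[OF W_twin_set]
    unfolding indep_set_def by blast
qed

text \<open>\<open>c\<close> is adjacent to exactly one of \<open>a\<close> and the vertices of \<open>W\<close>.\<close>
definition distinguishes :: "'a \<Rightarrow> 'a \<Rightarrow> bool" where
  "distinguishes a c \<longleftrightarrow> c \<in> V - W \<and> c \<noteq> a \<and> (E a c \<longleftrightarrow> c \<notin> boundary)"

text \<open>Otherwise \<open>a\<close> would be a twin of the vertices of \<open>W\<close>, contradicting the maximality of \<open>W\<close>.\<close>
lemma distinguishes_exists:
  assumes a: "a \<in> V - W" and agree: "a \<in> boundary \<longleftrightarrow> clique E W"
  shows "\<exists>c. distinguishes a c"
proof (rule ccontr)
  assume none: "\<nexists>c. distinguishes a c"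
  obtain w where w: "w \<in> W" using card_W_ge_2 by fastforce
  have same: "E w x \<longleftrightarrow> E a x" if "x \<noteq> w" "x \<noteq> a" for x
  proof (cases "x \<in> V")
    case xV: True
    show ?thesis
    proof (cases "x \<in> W")
      case True
      then show ?thesis
        using adj_in_W_iff_clique[OF w True] adj_W_iff_boundary[OF True a] agree that by simp
    next
      case False
      then have "\<not> distinguishes a x" "E w x \<longleftrightarrow> x \<in> boundary"
        using none adj_W_iff_boundary[OF w] edge_sym xV by blast+
      then show ?thesis using False xV that unfolding distinguishes_def by blast
    qed
  qed (use edge_in_V in blast)
  have "x \<in> nbhd E w - {a} \<longleftrightarrow> x \<in> nbhd E a - {w}" for x
    using same[of x] no_loop[of w] no_loop[of a] unfolding nbhd_def by (cases "x = w \<or> x = a") auto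
  then have "nbhd E w - {a} = nbhd E a - {w}" by blast
  then show False using tau_set_maximal[OF tau_set w a] unfolding twins_def by simp
qed

lemma distinguishing_set:
  assumes "clique E W"
  shows "\<exists>B\<subseteq>V - W. 2 * card B \<le> card (V - W) \<and> dominates distinguishes boundary B"
proof (rule small_dominating_set)
  show "finite (V - W)" using finite_V by simp
  show "boundary \<subseteq> V - W" unfolding boundary_def by blast
  show "\<forall>a\<in>boundary. \<exists>c\<in>V - W - {a}. distinguishes a c"
    using distinguishes_exists assms unfolding boundary_def distinguishes_def by blast
  show "\<forall>a\<in>boundary. \<forall>x\<in>boundary. distinguishes x a \<longrightarrow> distinguishes a x"
    unfolding distinguishes_def boundary_def using edge_sym by blast
qed

lemma distinguishes_separates_singleton:
  assumes c: "distinguishes a c" and a: "a \<in> V - W" and w: "w \<in> W"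
  shows "setdist E a {c} \<noteq> setdist E w {c}"
proof (rule setdist_neq_if_adjacency_differs)
  show "(\<exists>y\<in>{c}. E a y) \<noteq> (\<exists>y\<in>{c}. E w y)"
    using c adj_W_iff_boundary[OF w] edge_sym unfolding distinguishes_def by blast
qed (use c a w W_subset in \<open>auto simp: distinguishes_def\<close>)

lemma distinguishes_separates_pair:
  assumes c: "distinguishes a c" and a: "a \<in> V - W" "a \<notin> boundary"
    and w: "w \<in> W" "w' \<in> W" "w \<noteq> w'" and "\<not> clique E W"
  shows "setdist E a {w', c} \<noteq> setdist E w {w', c}"
proof (rule setdist_neq_if_adjacency_differs)
  show "(\<exists>y\<in>{w', c}. E a y) \<noteq> (\<exists>y\<in>{w', c}. E w y)"
    using c a adj_W_iff_boundary[OF w(2) a(1)] adj_W_iff_boundary[OF w(1)]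
      adj_in_W_iff_clique[OF w] \<open>\<not> clique E W\<close> edge_sym
    unfolding distinguishes_def by blast
qed (use c a w W_subset in \<open>auto simp: distinguishes_def\<close>)

lemma W_vertex_separates:
  assumes a: "a \<in> V - W" and w: "w \<in> W" "w0 \<in> W" "w \<noteq> w0"
    and "(a \<in> boundary) \<noteq> clique E W"
  shows "setdist E a {w0} \<noteq> setdist E w {w0}"
proof (rule setdist_neq_if_adjacency_differs)
  show "(\<exists>y\<in>{w0}. E a y) \<noteq> (\<exists>y\<in>{w0}. E w y)"
    using adj_W_iff_boundary[OF w(2) a] adj_in_W_iff_clique[OF w] assms(5) by simp
qed (use a w W_subset in auto)

lemma pairing_separates:
  assumes B: "B \<subseteq> V - W" and dist: "clique E W \<Longrightarrow> dominates distinguishes boundary B"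
    and A: "A = V - W - B" and w0: "w0 \<in> W" and g: "inj_on g A" "g ` A \<subseteq> W - {w0}"
    and u: "u \<in> A"
  shows "\<exists>z\<in>W \<union> B. setdist E u (pair_block A g z) \<noteq> setdist E (g u) (pair_block A g z)"
proof -
  have uV: "u \<in> V - W" and gu: "g u \<in> W" "g u \<noteq> w0" using u A g(2) by blast+
  have by_B: ?thesis if b: "b \<in> B" "distinguishes u b" for b
  proof -
    have "b \<notin> g ` A" using b(1) B g(2) by blast
    then have "setdist E u (pair_block A g b) \<noteq> setdist E (g u) (pair_block A g b)"
      using distinguishes_separates_singleton[OF b(2) uV gu(1)] by (simp add: pair_block_unpaired)
    then show ?thesis using b(1) by blast
  qed
  consider (W_vertex) "(u \<in> boundary) \<noteq> clique E W"
    | (B_vertex) "u \<in> boundary" "clique E W"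
    | (pair) "u \<notin> boundary" "\<not> clique E W" by blast
  then show ?thesis
  proof cases
    case W_vertex
    have "w0 \<notin> g ` A" using g(2) by blast
    then have "setdist E u (pair_block A g w0) \<noteq> setdist E (g u) (pair_block A g w0)"
      using W_vertex_separates[OF uV gu(1) w0 gu(2) W_vertex] by (simp add: pair_block_unpaired)
    then show ?thesis using w0 by blast
  next
    case B_vertex
    then show ?thesis using dist u A by_B unfolding dominates_def by blast
  next
    case pair
    obtain c where c: "distinguishes u c" using distinguishes_exists[OF uV] pair by blast
    show ?thesis
    proof (cases "c \<in> B")
      case False
      then have cA: "c \<in> A" using c A unfolding distinguishes_def by blast
      have gc: "g c \<in> W" "g u \<noteq> g c" using cA c g u unfolding distinguishes_def inj_on_def by blast+
      have "setdist E u (pair_block A g (g c)) \<noteq> setdist E (g u) (pair_block A g (g c))"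
        using distinguishes_separates_pair[OF c uV pair(1) gu(1) gc pair(2)]
        by (simp add: pair_block_paired[OF g(1) cA])
      then show ?thesis using gc(1) by blast
    qed (use by_B c in blast)
  qed
qed

lemma locating_partition_from_distinguishing_set:
  assumes B: "B \<subseteq> V - W"
    and dist: "clique E W \<Longrightarrow> dominates distinguishes boundary B"
  shows "\<exists>P. length P = card W + card B \<and> locating_partition V E P"
proof -
  define A where "A = V - W - B"
  obtain w0 where w0: "w0 \<in> W" using card_W_ge_2 by fastforce
  have "card A \<le> card (V - W)" unfolding A_def using finite_V by (intro card_mono) auto
  then have "card A \<le> card (W - {w0})" using card_outside_less w0 finite_W by simp
  then obtain g where g: "inj_on g A" "g ` A \<subseteq> W - {w0}"
    using card_le_inj[of A "W - {w0}"] finite_V finite_W unfolding A_def by blast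
  have "\<exists>P. length P = card (W \<union> B) \<and> locating_partition V E P"
  proof (rule locating_partition_of_pairing[where A = A and g = g])
    show "W \<union> B \<union> A = V" "(W \<union> B) \<inter> A = {}" using B W_subset unfolding A_def by blast+
    show "inj_on g A" "g ` A \<subseteq> W \<union> B" using g by blast+
    show "\<forall>u\<in>A. \<exists>z\<in>W \<union> B. setdist E u (pair_block A g z) \<noteq> setdist E (g u) (pair_block A g z)"
      using pairing_separates[OF B dist A_def w0 g] by blast
  qed
  moreover have "card (W \<union> B) = card W + card B"
    using B finite_W finite_subset[OF B] finite_V by (intro card_Un_disjoint) auto
  ultimately show ?thesis by simp
qed

lemma partition_dimension_eq_if_indep:
  assumes "indep_set E W"
  shows "partition_dimension V E = card W"
proof -
  obtain P where "length P = card W" "locating_partition V E P"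
    using locating_partition_from_distinguishing_set[of "{}"] assms clique_iff_not_indep by auto
  then show ?thesis
    using partition_dimension_le card_twin_set_le_partition_dimension[OF W_twin_set] by fastforce
qed

lemma card_W_less_partition_dimension_if_clique:
  assumes "clique E W"
  shows "card W < partition_dimension V E"
proof -
  obtain P where P: "length P = partition_dimension V E" "locating_partition V E P"
    using ex_locating_partition partition_dimension_attained by metis
  have "W \<noteq> {}" using card_W_ge_2 by auto
  then obtain v w where "v \<in> V - W" "w \<in> W" "E v w" using edge_leaving W_subset W_ne_V by blast
  then show ?thesis using card_twin_clique_less_length[OF P(2) W_twin_set assms] P(1) by simp
qed

lemma twice_partition_dimension_le: "2 * partition_dimension V E \<le> card V + card W"
proof (cases "clique E W")
  case True
  then obtain B where B: "B \<subseteq> V - W" "2 * card B \<le> card (V - W)"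
    "dominates distinguishes boundary B"
    using distinguishing_set by blast
  then obtain P where "length P = card W + card B" "locating_partition V E P"
    using locating_partition_from_distinguishing_set by blast
  then have "partition_dimension V E \<le> card W + card B" using partition_dimension_le by fastforce
  then show ?thesis using B(2) card_outside card_mono[OF finite_V W_subset] by linarith
next
  case False
  then show ?thesis
    using partition_dimension_eq_if_indep clique_iff_not_indep card_mono[OF finite_V W_subset]
    by simp
qed

lemma partition_dimension_twin_class:
  "card W \<le> partition_dimension V E \<and> 2 * partition_dimension V E \<le> card V + card W
   \<and> (partition_dimension V E = card W
        \<longleftrightarrow> graph_iso W (induced_edges E W) {..<card W} coK_edges)
   \<and> (card W < partition_dimension V E
        \<longleftrightarrow> graph_iso W (induced_edges E W) {..<card W} K_edges)"
  using card_twin_set_le_partition_dimension[OF W_twin_set] twice_partition_dimension_le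
    partition_dimension_eq_if_indep card_W_less_partition_dimension_if_clique
    clique_iff_not_indep induced_graph_iso_K_edges_iff[OF W_subset]
    induced_graph_iso_coK_edges_iff[OF W_subset]
  by auto

end

theorem theorem18:
  fixes V :: "'a set" and E :: "'a \<Rightarrow> 'a \<Rightarrow> bool"
  assumes "connected_graph V E"
    and "\<not> graph_iso V E {..<card V} K_edges"
    and "real (twin_number V E) > real (card V) / 2"
  shows "twin_number V E \<le> partition_dimension V E
       \<and> real (partition_dimension V E) \<le> (real (card V) + real (twin_number V E)) / 2
       \<and> (\<forall>W. tau_set V E W \<longrightarrow>
            ((partition_dimension V E = twin_number V E
                \<longleftrightarrow> graph_iso W (induced_edges E W) {..<twin_number V E} coK_edges)
           \<and> ((twin_number V E < partition_dimension V E
                \<and> real (partition_dimension V E) \<le> (real (card V) + real (twin_number V E)) / 2)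
                \<longleftrightarrow> graph_iso W (induced_edges E W) {..<twin_number V E} K_edges)))"
proof -
  interpret connected_simple_graph V E by (rule connected_simple_graph.intro) (fact assms(1))
  let ?\<tau> = "twin_number V E" and ?\<beta> = "partition_dimension V E"
  have tau_case: "?\<tau> \<le> ?\<beta> \<and> 2 * ?\<beta> \<le> card V + ?\<tau>
      \<and> (?\<beta> = ?\<tau> \<longleftrightarrow> graph_iso W (induced_edges E W) {..<?\<tau>} coK_edges)
      \<and> (?\<tau> < ?\<beta> \<longleftrightarrow> graph_iso W (induced_edges E W) {..<?\<tau>} K_edges)"
    if W: "tau_set V E W" for W
  proof -
    have card_W: "card W = ?\<tau>" using W unfolding tau_set_def by simp
    have "W \<noteq> V" using W assms(2) twin_set_V_complete unfolding tau_set_def by blast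
    moreover have "card V < 2 * card W" using assms(3) card_W by linarith
    ultimately interpret large_twin_class V E W using W by unfold_locales
    show ?thesis using partition_dimension_twin_class unfolding card_W .
  qed
  obtain W0 where "tau_set V E W0" using tau_set_exists by blast
  then have "?\<tau> \<le> ?\<beta>" "real ?\<beta> \<le> (real (card V) + real ?\<tau>) / 2"
    using tau_case[of W0] by simp_all
  then show ?thesis using tau_case by blast
qed

end
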